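(* Let $r \ge s \ge 2$ be integers. Then $$\mathrm{gp_e}(P_r \,\square\, P_s) = \begin{cases} r+2, & s = 2,\\ 2r, & s = 3,\\ 2r+2s-8, & s \ge 4.\end{cases}$$
   Context: $P_n$ denotes the path on $n$ vertices. The Cartesian product $G \,\square\, H$ has vertex set $V(G)\times V(H)$, with $(g,h)$ adjacent to $(g',h')$ iff either $gg' \in E(G)$ and $h = h'$, or $g = g'$ and $hh' \in E(H)$. A set $S$ of edges of a graph $G$ is an edge general position set if no geodesic (shortest path) of $G$ contains three edges of $S$; $\mathrm{gp_e}(G)$ is the maximum cardinality of an edge general position set of $G$. *)

theory Defs
  imports Main
begin

definition walk :: "'a set \<Rightarrow> ('a \<Rightarrow> 'a \<Rightarrow> bool) \<Rightarrow> 'a list \<Rightarrow> bool" where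
  "walk V adj xs \<longleftrightarrow> xs \<noteq> [] \<and> set xs \<subseteq> V \<and>
     (\<forall>i. i + 1 < length xs \<longrightarrow> adj (xs ! i) (xs ! (i + 1)))"

definition geodesic :: "'a set \<Rightarrow> ('a \<Rightarrow> 'a \<Rightarrow> bool) \<Rightarrow> 'a list \<Rightarrow> bool" where
  "geodesic V adj xs \<longleftrightarrow> walk V adj xs \<and>
     (\<forall>ys. walk V adj ys \<and> hd ys = hd xs \<and> last ys = last xs \<longrightarrow> length xs \<le> length ys)"

definition walk_edges :: "'a list \<Rightarrow> 'a set set" where
  "walk_edges xs = {{xs ! i, xs ! (i + 1)} | i. i + 1 < length xs}"

definition graph_edges :: "'a set \<Rightarrow> ('a \<Rightarrow> 'a \<Rightarrow> bool) \<Rightarrow> 'a set set" where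
  "graph_edges V adj = {{u, v} | u v. u \<in> V \<and> v \<in> V \<and> adj u v}"

definition edge_gp_set :: "'a set \<Rightarrow> ('a \<Rightarrow> 'a \<Rightarrow> bool) \<Rightarrow> 'a set set \<Rightarrow> bool" where
  "edge_gp_set V adj S \<longleftrightarrow> S \<subseteq> graph_edges V adj \<and>
     (\<forall>xs. geodesic V adj xs \<longrightarrow>
        \<not> (\<exists>e1 e2 e3. e1 \<in> S \<and> e2 \<in> S \<and> e3 \<in> S \<and> e1 \<noteq> e2 \<and> e1 \<noteq> e3 \<and> e2 \<noteq> e3 \<and>
               e1 \<in> walk_edges xs \<and> e2 \<in> walk_edges xs \<and> e3 \<in> walk_edges xs))"

definition gp_e :: "'a set \<Rightarrow> ('a \<Rightarrow> 'a \<Rightarrow> bool) \<Rightarrow> nat" where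
  "gp_e V adj = Max (card ` {S. edge_gp_set V adj S})"

definition path_V :: "nat \<Rightarrow> nat set" where
  "path_V n = {0..<n}"

definition path_adj :: "nat \<Rightarrow> nat \<Rightarrow> bool" where
  "path_adj a b \<longleftrightarrow> a + 1 = b \<or> b + 1 = a"

definition cart_adj :: "('a \<Rightarrow> 'a \<Rightarrow> bool) \<Rightarrow> ('b \<Rightarrow> 'b \<Rightarrow> bool) \<Rightarrow> 'a \<times> 'b \<Rightarrow> 'a \<times> 'b \<Rightarrow> bool" where
  "cart_adj adjG adjH p q \<longleftrightarrow>
     (adjG (fst p) (fst q) \<and> snd p = snd q) \<or> (fst p = fst q \<and> adjH (snd p) (snd q))"

end

theory Submission
  imports Defs
begin

(* In the grid P_r x P_s a walk is a geodesic iff its length is the l1-distance of its end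
   vertices; hence both coordinates are monotone along a geodesic.  A geodesic therefore crosses
   the cut between two consecutive columns (or rows) at most once, and a geodesic through interior
   points of two opposite sides of the grid stays strictly between the other two sides.

   Lower bounds: all vertical edges plus the two horizontal edges between the first two columns
   (s = 2); all vertical edges (s = 3); the interior edges sticking out of the four sides (s >= 4).
   Each set is a union of cut classes meeting every geodesic at most once, and for s >= 4 a
   geodesic meets edges of at most two of the four sides.

   Upper bounds: double counting against a family of corner-to-corner geodesics with two bends,
   one per interior row and column and diagonal direction (s >= 4), or a variant of size 2r
   (s = 3), such that every edge lies on two of them while each contains at most two edges of an
   edge general position set.  For s = 2, a vertical edge of the set forces all its horizontal
   edges onto the two geodesics of this kind through that column, which leaves room for only two
   of them; without vertical edges the set lies on the two row geodesics. *)

abbreviation grid :: "nat \<Rightarrow> nat \<Rightarrow> (nat \<times> nat) set" where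
  "grid r s \<equiv> path_V r \<times> path_V s"

abbreviation grid_adj :: "nat \<times> nat \<Rightarrow> nat \<times> nat \<Rightarrow> bool" where
  "grid_adj \<equiv> cart_adj path_adj path_adj"

lemma walk_edges_finite: "finite (walk_edges xs)"
proof -
  have "walk_edges xs = (\<lambda>i. {xs ! i, xs ! (i + 1)}) ` {..<length xs - 1}"
    unfolding walk_edges_def by auto
  then show ?thesis by simp
qed

lemma walk_edges_subset_set: "e \<in> walk_edges xs \<Longrightarrow> e \<subseteq> set xs"
  unfolding walk_edges_def by auto

lemma graph_edges_finite: "finite V \<Longrightarrow> finite (graph_edges V adj)"
proof -
  assume "finite V"
  moreover have "graph_edges V adj \<subseteq> (\<lambda>(u, v). {u, v}) ` (V \<times> V)"
    unfolding graph_edges_def by auto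
  ultimately show ?thesis by (meson finite_SigmaI finite_imageI finite_subset)
qed

lemma card_le_2_iff_eq:
  assumes "finite A"
  shows "card A \<le> 2 \<longleftrightarrow> (\<forall>a\<in>A. \<forall>b\<in>A. \<forall>c\<in>A. a = b \<or> a = c \<or> b = c)"
proof
  assume "card A \<le> 2"
  show "\<forall>a\<in>A. \<forall>b\<in>A. \<forall>c\<in>A. a = b \<or> a = c \<or> b = c"
  proof (intro ballI, rule ccontr)
    fix a b c assume "a \<in> A" "b \<in> A" "c \<in> A" "\<not> (a = b \<or> a = c \<or> b = c)"
    then have "card {a, b, c} \<le> card A" "card {a, b, c} = 3"
      using card_mono[OF assms, of "{a, b, c}"] by auto
    with \<open>card A \<le> 2\<close> show False by simp
  qed
next
  assume distinct3: "\<forall>a\<in>A. \<forall>b\<in>A. \<forall>c\<in>A. a = b \<or> a = c \<or> b = c"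
  show "card A \<le> 2"
  proof (rule ccontr)
    assume "\<not> card A \<le> 2"
    then obtain B where "B \<subseteq> A" "card B = 3"
      by (metis not_less_eq_eq numeral_2_eq_2 numeral_3_eq_3 obtain_subset_with_card_n)
    with distinct3 show False by (auto simp: card_3_iff)
  qed
qed

lemma edge_gp_set_iff:
  "edge_gp_set V adj S \<longleftrightarrow>
     S \<subseteq> graph_edges V adj \<and> (\<forall>xs. geodesic V adj xs \<longrightarrow> card (S \<inter> walk_edges xs) \<le> 2)"
  unfolding edge_gp_set_def by (simp add: card_le_2_iff_eq walk_edges_finite) blast

lemma edge_gp_set_card_walk_edges:
  "edge_gp_set V adj S \<Longrightarrow> geodesic V adj xs \<Longrightarrow> card (S \<inter> walk_edges xs) \<le> 2"
  by (simp add: edge_gp_set_iff)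

lemma edge_gp_set_finite: "finite V \<Longrightarrow> edge_gp_set V adj S \<Longrightarrow> finite S"
  using graph_edges_finite finite_subset by (auto simp: edge_gp_set_iff)

lemma gp_e_eqI:
  assumes "\<And>S. edge_gp_set V adj S \<Longrightarrow> card S \<le> n"
    and "edge_gp_set V adj S0" and "card S0 = n"
  shows "gp_e V adj = n"
  unfolding gp_e_def
proof (rule Max_eqI)
  show "finite (card ` {S. edge_gp_set V adj S})"
    by (rule finite_subset[of _ "{..n}"]) (use assms(1) in auto)
qed (use assms in auto)

lemma edge_gp_card_le_double_cover:
  fixes P :: "'k \<Rightarrow> 'a list"
  assumes gp: "edge_gp_set V adj S" and "finite V" and "finite K"
    and geodesic: "\<And>k. k \<in> K \<Longrightarrow> geodesic V adj (P k)"
    and cover: "\<And>e. e \<in> graph_edges V adj \<Longrightarrow>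
      \<exists>k1\<in>K. \<exists>k2\<in>K. k1 \<noteq> k2 \<and> e \<in> walk_edges (P k1) \<and> e \<in> walk_edges (P k2)"
  shows "card S \<le> card K"
proof -
  have S: "S \<subseteq> graph_edges V adj" "finite S"
    using gp edge_gp_set_finite[OF \<open>finite V\<close> gp] by (simp_all add: edge_gp_set_iff)
  let ?on = "\<lambda>e k. if e \<in> walk_edges (P k) then 1 else 0 :: nat"
  have "2 * card S = (\<Sum>e\<in>S. 2)" by simp
  also have "\<dots> \<le> (\<Sum>e\<in>S. card {k\<in>K. e \<in> walk_edges (P k)})"
  proof (rule sum_mono)
    fix e assume "e \<in> S"
    then obtain k1 k2 where "k1 \<noteq> k2" "{k1, k2} \<subseteq> {k\<in>K. e \<in> walk_edges (P k)}"
      using cover S(1) by blast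
    then show "2 \<le> card {k\<in>K. e \<in> walk_edges (P k)}"
      using card_mono[OF _ \<open>{k1, k2} \<subseteq> _\<close>] \<open>finite K\<close> by simp
  qed
  also have "\<dots> = (\<Sum>e\<in>S. \<Sum>k\<in>K. ?on e k)"
    using \<open>finite K\<close> by (simp add: sum.If_cases Int_def)
  also have "\<dots> = (\<Sum>k\<in>K. \<Sum>e\<in>S. ?on e k)" by (rule sum.swap)
  also have "\<dots> = (\<Sum>k\<in>K. card (S \<inter> walk_edges (P k)))"
    using S(2) by (simp add: sum.If_cases Int_def)
  also have "\<dots> \<le> (\<Sum>k\<in>K. 2)"
    using edge_gp_set_card_walk_edges[OF gp] geodesic by (intro sum_mono) auto
  finally show ?thesis by simp
qed

lemma card_Int_le_2_two_classes:
  assumes "finite W" "S \<inter> W \<subseteq> A \<union> B" "card (W \<inter> A) \<le> 1" "card (W \<inter> B) \<le> 1"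
  shows "card (S \<inter> W) \<le> 2"
proof -
  have "card (S \<inter> W) \<le> card ((W \<inter> A) \<union> (W \<inter> B))"
    using assms(1,2) by (intro card_mono) auto
  also have "\<dots> \<le> card (W \<inter> A) + card (W \<inter> B)" by (rule card_Un_le)
  finally show ?thesis using assms(3,4) by simp
qed

lemma card_Int_le_2_opposite_pairs:
  assumes "card (W \<inter> A) \<le> 1" "card (W \<inter> A') \<le> 1" "card (W \<inter> B) \<le> 1" "card (W \<inter> B') \<le> 1"
    and AA': "W \<inter> A \<noteq> {} \<Longrightarrow> W \<inter> A' \<noteq> {} \<Longrightarrow> W \<inter> (B \<union> B') = {}"
    and BB': "W \<inter> B \<noteq> {} \<Longrightarrow> W \<inter> B' \<noteq> {} \<Longrightarrow> W \<inter> (A \<union> A') = {}"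
  shows "card ((A \<union> A' \<union> B \<union> B') \<inter> W) \<le> 2"
proof -
  have split: "(A \<union> A' \<union> B \<union> B') \<inter> W = ((W \<inter> A) \<union> (W \<inter> A')) \<union> ((W \<inter> B) \<union> (W \<inter> B'))"
    by blast
  have "card ((A \<union> A' \<union> B \<union> B') \<inter> W) \<le>
      card (W \<inter> A) + card (W \<inter> A') + (card (W \<inter> B) + card (W \<inter> B'))"
    unfolding split using card_Un_le[of "W \<inter> A" "W \<inter> A'"] card_Un_le[of "W \<inter> B" "W \<inter> B'"]
      card_Un_le[of "(W \<inter> A) \<union> (W \<inter> A')" "(W \<inter> B) \<union> (W \<inter> B')"] by linarith
  moreover have "card (W \<inter> A) = 1 \<and> card (W \<inter> A') = 1 \<longrightarrow> card (W \<inter> B) + card (W \<inter> B') = 0"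
  proof
    assume "card (W \<inter> A) = 1 \<and> card (W \<inter> A') = 1"
    then have "W \<inter> (B \<union> B') = {}" using AA' by force
    then show "card (W \<inter> B) + card (W \<inter> B') = 0" by (simp add: Int_Un_distrib)
  qed
  moreover have "card (W \<inter> B) = 1 \<and> card (W \<inter> B') = 1 \<longrightarrow> card (W \<inter> A) + card (W \<inter> A') = 0"
  proof
    assume "card (W \<inter> B) = 1 \<and> card (W \<inter> B') = 1"
    then have "W \<inter> (A \<union> A') = {}" using BB' by force
    then show "card (W \<inter> A) + card (W \<inter> A') = 0" by (simp add: Int_Un_distrib)
  qed
  ultimately show ?thesis using assms(1-4) by arith
qed

section \<open>Geodesics in the grid\<close>

definition path_dist :: "nat \<Rightarrow> nat \<Rightarrow> int" where
  "path_dist a b = \<bar>int a - int b\<bar>"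

definition grid_dist :: "nat \<times> nat \<Rightarrow> nat \<times> nat \<Rightarrow> int" where
  "grid_dist p q = path_dist (fst p) (fst q) + path_dist (snd p) (snd q)"

lemma path_dist_triangle: "path_dist a c \<le> path_dist a b + path_dist b c"
  unfolding path_dist_def by arith

lemma grid_dist_triangle: "grid_dist p u \<le> grid_dist p q + grid_dist q u"
  unfolding grid_dist_def path_dist_def by arith

lemma grid_dist_self [simp]: "grid_dist p p = 0"
  unfolding grid_dist_def path_dist_def by simp

lemma grid_dist_eq_0_iff: "grid_dist p q = 0 \<longleftrightarrow> p = q"
  unfolding grid_dist_def path_dist_def by (cases p, cases q) auto

lemma grid_dist_nonneg: "0 \<le> grid_dist p q"
  unfolding grid_dist_def path_dist_def by simp

lemma grid_adj_dist: "grid_adj p q \<Longrightarrow> grid_dist p q = 1"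
  by (auto simp: cart_adj_def path_adj_def grid_dist_def path_dist_def)

lemma walk_grid_dist_le:
  assumes "walk V grid_adj xs" "i \<le> j" "j < length xs"
  shows "grid_dist (xs ! i) (xs ! j) \<le> int (j - i)"
  using assms(2,3)
proof (induction j)
  case 0
  then show ?case by simp
next
  case (Suc j)
  show ?case
  proof (cases "i = Suc j")
    case False
    then have "grid_dist (xs ! i) (xs ! j) \<le> int (j - i)" "grid_adj (xs ! j) (xs ! Suc j)"
      using Suc assms(1) by (auto simp: walk_def)
    then show ?thesis
      using False Suc.prems grid_dist_triangle[of "xs ! i" "xs ! Suc j" "xs ! j"]
      by (simp add: grid_adj_dist)
  qed simp
qed

lemma walk_grid_length_ge:
  assumes "walk V grid_adj xs"
  shows "grid_dist (hd xs) (last xs) + 1 \<le> int (length xs)"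
proof -
  have "length xs > 0" using assms by (simp add: walk_def)
  then have "int (length xs - 1) = int (length xs) - 1" by (cases xs) auto
  with \<open>length xs > 0\<close> show ?thesis
    using walk_grid_dist_le[OF assms, of 0 "length xs - 1"] by (simp add: hd_conv_nth last_conv_nth)
qed

lemma walk_ConsI: "walk V adj ys \<Longrightarrow> p \<in> V \<Longrightarrow> adj p (hd ys) \<Longrightarrow> walk V adj (p # ys)"
  unfolding walk_def by (auto simp: nth_Cons hd_conv_nth split: nat.splits)

lemma grid_walk_exists:
  assumes "p \<in> grid r s" "q \<in> grid r s"
  shows "\<exists>ys. walk (grid r s) grid_adj ys \<and> hd ys = p \<and> last ys = q \<and>
    int (length ys) = grid_dist p q + 1"
  using assms
proof (induction "nat (grid_dist p q)" arbitrary: p)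
  case 0
  then have "p = q" using grid_dist_nonneg[of p q] by (simp add: grid_dist_eq_0_iff[symmetric])
  then show ?case using 0 by (intro exI[of _ "[p]"]) (simp add: walk_def)
next
  case (Suc n)
  obtain x y where p: "p = (x, y)" by fastforce
  obtain x' y' where q: "q = (x', y')" by fastforce
  define p' where "p' = (if x < x' then (x + 1, y) else if x' < x then (x - 1, y)
    else if y < y' then (x, y + 1) else (x, y - 1))"
  have "p \<noteq> q" using Suc.hyps(2) by auto
  have p'_grid: "p' \<in> grid r s"
    using Suc.prems unfolding p'_def p q by (auto simp: path_V_def)
  have adj: "grid_adj p p'"
    using \<open>p \<noteq> q\<close> unfolding p'_def p q by (auto simp: cart_adj_def path_adj_def)
  have dist: "grid_dist p' q = grid_dist p q - 1"
    using \<open>p \<noteq> q\<close> unfolding p'_def p q by (auto simp: grid_dist_def path_dist_def)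
  then have "n = nat (grid_dist p' q)" using Suc.hyps(2) by simp
  then obtain ys where ys: "walk (grid r s) grid_adj ys" "hd ys = p'" "last ys = q"
    "int (length ys) = grid_dist p' q + 1"
    using Suc.hyps(1) Suc.prems(2) p'_grid by blast
  have "ys \<noteq> []" using ys(1) by (simp add: walk_def)
  then show ?case
    using Suc.prems ys dist adj walk_ConsI[OF ys(1), of p] by (intro exI[of _ "p # ys"]) auto
qed

lemma grid_geodesic_iff:
  "geodesic (grid r s) grid_adj xs \<longleftrightarrow>
     walk (grid r s) grid_adj xs \<and> int (length xs) = grid_dist (hd xs) (last xs) + 1"
proof
  assume geo: "geodesic (grid r s) grid_adj xs"
  then have walk: "walk (grid r s) grid_adj xs" by (simp add: geodesic_def)
  then have "xs \<noteq> []" "set xs \<subseteq> grid r s" by (simp_all add: walk_def)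
  then have "hd xs \<in> grid r s" "last xs \<in> grid r s"
    using hd_in_set last_in_set by blast+
  from grid_walk_exists[OF this] obtain ys where ys: "walk (grid r s) grid_adj ys"
    "hd ys = hd xs" "last ys = last xs" "int (length ys) = grid_dist (hd xs) (last xs) + 1"
    by blast
  have "length xs \<le> length ys"
    using geo ys(1-3) unfolding geodesic_def by blast
  then show "walk (grid r s) grid_adj xs \<and> int (length xs) = grid_dist (hd xs) (last xs) + 1"
    using walk walk_grid_length_ge[OF walk] ys(4) by simp
next
  assume xs: "walk (grid r s) grid_adj xs \<and> int (length xs) = grid_dist (hd xs) (last xs) + 1"
  have "length xs \<le> length ys"
    if "walk (grid r s) grid_adj ys" "hd ys = hd xs" "last ys = last xs" for ys
    using xs walk_grid_length_ge[OF that(1)] that(2,3) by simp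
  then show "geodesic (grid r s) grid_adj xs"
    using xs unfolding geodesic_def by blast
qed

lemma mono_or_antimono_if_dist_additive:
  fixes f :: "nat \<Rightarrow> nat"
  assumes "\<And>a b. a \<le> b \<Longrightarrow> b < n \<Longrightarrow> path_dist (f 0) (f (n - 1)) =
    path_dist (f 0) (f a) + path_dist (f a) (f b) + path_dist (f b) (f (n - 1))"
  shows "mono_on {..<n} f \<or> antimono_on {..<n} f"
proof (cases "f 0 \<le> f (n - 1)")
  case True
  have "f a \<le> f b" if "a \<le> b" "b < n" for a b
    using assms[OF that] True unfolding path_dist_def by arith
  then show ?thesis by (simp add: monotone_on_def)
next
  case False
  have "f b \<le> f a" if "a \<le> b" "b < n" for a b
    using assms[OF that] False unfolding path_dist_def by arith
  then show ?thesis by (simp add: monotone_on_def)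
qed

lemma grid_geodesic_monotone:
  assumes "geodesic (grid r s) grid_adj xs"
  shows "mono_on {..<length xs} (\<lambda>t. fst (xs ! t)) \<or> antimono_on {..<length xs} (\<lambda>t. fst (xs ! t))"
    and "mono_on {..<length xs} (\<lambda>t. snd (xs ! t)) \<or> antimono_on {..<length xs} (\<lambda>t. snd (xs ! t))"
proof -
  let ?n = "length xs"
  have walk: "walk (grid r s) grid_adj xs" and "xs \<noteq> []"
    using assms by (simp_all add: grid_geodesic_iff walk_def)
  then have len: "int ?n = grid_dist (xs ! 0) (xs ! (?n - 1)) + 1"
    using assms by (simp add: grid_geodesic_iff hd_conv_nth last_conv_nth)
  have "path_dist (c (xs ! 0)) (c (xs ! (?n - 1))) = path_dist (c (xs ! 0)) (c (xs ! a)) +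
      path_dist (c (xs ! a)) (c (xs ! b)) + path_dist (c (xs ! b)) (c (xs ! (?n - 1)))"
    if "a \<le> b" "b < ?n" and c: "c = fst \<or> c = snd" for a b c
  proof -
    \<comment> \<open>the pieces' end distances add up to at most the walk's length, which is the distance of its ends,
      so every triangle inequality below is tight\<close>
    have "grid_dist (xs ! 0) (xs ! a) \<le> int a" "grid_dist (xs ! a) (xs ! b) \<le> int b - int a"
      "grid_dist (xs ! b) (xs ! (?n - 1)) \<le> int ?n - 1 - int b"
      using walk_grid_dist_le[OF walk, of 0 a] walk_grid_dist_le[OF walk, of a b]
        walk_grid_dist_le[OF walk, of b "?n - 1"] that \<open>xs \<noteq> []\<close>
      by (simp_all add: of_nat_diff le_diff_conv2 Suc_le_eq)
    moreover have "path_dist (d (xs ! 0)) (d (xs ! (?n - 1))) \<le> path_dist (d (xs ! 0)) (d (xs ! a)) +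
      path_dist (d (xs ! a)) (d (xs ! b)) + path_dist (d (xs ! b)) (d (xs ! (?n - 1)))" for d
      by (meson path_dist_triangle add_mono order_trans order_refl)
    ultimately show ?thesis
      using len c unfolding grid_dist_def by (elim disjE) (smt (verit))+
  qed
  then show "mono_on {..<?n} (\<lambda>t. fst (xs ! t)) \<or> antimono_on {..<?n} (\<lambda>t. fst (xs ! t))"
    and "mono_on {..<?n} (\<lambda>t. snd (xs ! t)) \<or> antimono_on {..<?n} (\<lambda>t. snd (xs ! t))"
    by (auto intro!: mono_or_antimono_if_dist_additive)
qed

lemma mono_or_antimono_crosses_once:
  fixes f :: "nat \<Rightarrow> nat"
  assumes "mono_on {..<n} f \<or> antimono_on {..<n} f" "i < j" "j + 1 < n"
    and "{f i, f (i + 1)} = {a, a + 1}" "{f j, f (j + 1)} = {a, a + 1}"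
  shows False
proof -
  have idx: "i \<in> {..<n}" "i + 1 \<in> {..<n}" "j \<in> {..<n}" "j + 1 \<in> {..<n}" "i + 1 \<le> j"
    using assms(2,3) by auto
  from assms(1) have "f i \<le> f (i + 1) \<and> f (i + 1) \<le> f j \<and> f j \<le> f (j + 1) \<or>
      f (j + 1) \<le> f j \<and> f j \<le> f (i + 1) \<and> f (i + 1) \<le> f i"
  proof
    assume "mono_on {..<n} f"
    then show ?thesis using idx monotone_onD[of "{..<n}" "(\<le>)" "(\<le>)" f] by simp
  next
    assume "antimono_on {..<n} f"
    then show ?thesis using idx monotone_onD[of "{..<n}" "(\<le>)" "\<lambda>x y. y \<le> x" f] by simp
  qed
  with assms(4,5) show False by (auto simp: doubleton_eq_iff)
qed

lemma mono_or_antimono_between: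
  fixes X Y :: "nat \<Rightarrow> nat"
  assumes X: "mono_on {..<n} X \<or> antimono_on {..<n} X"
    and Y: "mono_on {..<n} Y \<or> antimono_on {..<n} Y"
    and "p < n" "q < n" "w < n" "X p < X w" "X w < X q"
  shows "min (Y p) (Y q) \<le> Y w \<and> Y w \<le> max (Y p) (Y q)"
proof -
  from X have "p < w \<and> w < q \<or> q < w \<and> w < p"
  proof
    assume "mono_on {..<n} X"
    then show ?thesis
      using assms(3-7) monotone_onD[of "{..<n}" "(\<le>)" "(\<le>)" X] by (meson lessThan_iff not_le)
  next
    assume "antimono_on {..<n} X"
    then show ?thesis
      using assms(3-7) monotone_onD[of "{..<n}" "(\<le>)" "\<lambda>x y. y \<le> x" X] by (meson lessThan_iff not_le)
  qed
  then have "Y p \<le> Y w \<and> Y w \<le> Y q \<or> Y q \<le> Y w \<and> Y w \<le> Y p"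
    using Y assms(3-5) monotone_onD[of "{..<n}" "(\<le>)" _ Y]
    by (smt (verit, best) lessThan_iff less_imp_le_nat)
  then show ?thesis by auto
qed

definition hedge :: "nat \<times> nat \<Rightarrow> (nat \<times> nat) set" where
  "hedge p = {p, (fst p + 1, snd p)}"

definition vedge :: "nat \<times> nat \<Rightarrow> (nat \<times> nat) set" where
  "vedge p = {p, (fst p, snd p + 1)}"

lemma grid_edges:
  "graph_edges (grid r s) grid_adj =
     hedge ` {p. fst p + 1 < r \<and> snd p < s} \<union> vedge ` {p. fst p < r \<and> snd p + 1 < s}"
proof (intro equalityI subsetI)
  fix e assume "e \<in> graph_edges (grid r s) grid_adj"
  then obtain x y x' y' where e: "e = {(x, y), (x', y')}" and grid: "x < r" "y < s" "x' < r" "y' < s"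
    and adj: "grid_adj (x, y) (x', y')"
    unfolding graph_edges_def path_V_def by auto
  from adj consider "x' = x + 1" "y' = y" | "x = x' + 1" "y' = y" | "x' = x" "y' = y + 1"
    | "x' = x" "y = y' + 1"
    unfolding cart_adj_def path_adj_def by auto
  then show "e \<in> hedge ` {p. fst p + 1 < r \<and> snd p < s} \<union> vedge ` {p. fst p < r \<and> snd p + 1 < s}"
    by cases (use e grid in \<open>force simp: hedge_def vedge_def insert_commute\<close>)+
next
  fix e assume "e \<in> hedge ` {p. fst p + 1 < r \<and> snd p < s} \<union> vedge ` {p. fst p < r \<and> snd p + 1 < s}"
  then obtain x y where "e = {(x, y), (x + 1, y)} \<and> x + 1 < r \<and> y < s \<or>
      e = {(x, y), (x, y + 1)} \<and> x < r \<and> y + 1 < s"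
    unfolding hedge_def vedge_def by force
  then show "e \<in> graph_edges (grid r s) grid_adj"
    unfolding graph_edges_def path_V_def cart_adj_def path_adj_def by fastforce
qed

lemma inj_hedge: "inj hedge"
  by (auto simp: inj_def hedge_def doubleton_eq_iff prod_eq_iff)

lemma inj_vedge: "inj vedge"
  by (auto simp: inj_def vedge_def doubleton_eq_iff prod_eq_iff)

lemma hedge_neq_vedge: "hedge p \<noteq> vedge q"
  by (auto simp: hedge_def vedge_def doubleton_eq_iff prod_eq_iff)

lemma hedge_in_walk_edges:
  "hedge (x, y) \<in> walk_edges xs \<Longrightarrow> (x, y) \<in> set xs \<and> (x + 1, y) \<in> set xs"
  by (auto dest: walk_edges_subset_set simp: hedge_def)

lemma vedge_in_walk_edges:
  "vedge (x, y) \<in> walk_edges xs \<Longrightarrow> (x, y) \<in> set xs \<and> (x, y + 1) \<in> set xs"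
  by (auto dest: walk_edges_subset_set simp: vedge_def)

lemma walk_edges_hedgeE:
  assumes "hedge (a, y) \<in> walk_edges xs"
  obtains i where "i + 1 < length xs" "{fst (xs ! i), fst (xs ! (i + 1))} = {a, a + 1}"
    "snd (xs ! i) = y"
  using assms unfolding walk_edges_def hedge_def
  by (auto simp: doubleton_eq_iff) (metis fst_conv snd_conv)+

lemma walk_edges_vedgeE:
  assumes "vedge (x, b) \<in> walk_edges xs"
  obtains i where "i + 1 < length xs" "{snd (xs ! i), snd (xs ! (i + 1))} = {b, b + 1}"
    "fst (xs ! i) = x"
  using assms unfolding walk_edges_def vedge_def
  by (auto simp: doubleton_eq_iff) (metis fst_conv snd_conv)+

lemma grid_geodesic_hedge_unique:
  assumes geo: "geodesic (grid r s) grid_adj xs"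
    and "hedge (a, y) \<in> walk_edges xs" "hedge (a, y') \<in> walk_edges xs"
  shows "y = y'"
proof -
  obtain i where i: "i + 1 < length xs" "{fst (xs ! i), fst (xs ! (i + 1))} = {a, a + 1}"
    "snd (xs ! i) = y" using assms(2) by (rule walk_edges_hedgeE)
  obtain j where j: "j + 1 < length xs" "{fst (xs ! j), fst (xs ! (j + 1))} = {a, a + 1}"
    "snd (xs ! j) = y'" using assms(3) by (rule walk_edges_hedgeE)
  have "\<not> i < j" "\<not> j < i"
    using mono_or_antimono_crosses_once[OF grid_geodesic_monotone(1)[OF geo]] i j by blast+
  with i j show ?thesis by simp
qed

lemma grid_geodesic_vedge_unique:
  assumes geo: "geodesic (grid r s) grid_adj xs"
    and "vedge (x, b) \<in> walk_edges xs" "vedge (x', b) \<in> walk_edges xs"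
  shows "x = x'"
proof -
  obtain i where i: "i + 1 < length xs" "{snd (xs ! i), snd (xs ! (i + 1))} = {b, b + 1}"
    "fst (xs ! i) = x" using assms(2) by (rule walk_edges_vedgeE)
  obtain j where j: "j + 1 < length xs" "{snd (xs ! j), snd (xs ! (j + 1))} = {b, b + 1}"
    "fst (xs ! j) = x'" using assms(3) by (rule walk_edges_vedgeE)
  have "\<not> i < j" "\<not> j < i"
    using mono_or_antimono_crosses_once[OF grid_geodesic_monotone(2)[OF geo]] i j by blast+
  with i j show ?thesis by simp
qed

lemma grid_geodesic_card_hedges:
  assumes "geodesic (grid r s) grid_adj xs"
  shows "card (walk_edges xs \<inter> hedge ` ({a} \<times> B)) \<le> 1"
  using grid_geodesic_hedge_unique[OF assms]
  by (auto simp: card_le_Suc0_iff_eq walk_edges_finite)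

lemma grid_geodesic_card_vedges:
  assumes "geodesic (grid r s) grid_adj xs"
  shows "card (walk_edges xs \<inter> vedge ` (A \<times> {b})) \<le> 1"
  using grid_geodesic_vedge_unique[OF assms]
  by (auto simp: card_le_Suc0_iff_eq walk_edges_finite)

lemma grid_geodesic_snd_between:
  assumes geo: "geodesic (grid r s) grid_adj xs"
    and "u \<in> set xs" "v \<in> set xs" "w \<in> set xs" "fst u < fst w" "fst w < fst v"
  shows "min (snd u) (snd v) \<le> snd w \<and> snd w \<le> max (snd u) (snd v)"
proof -
  obtain p q m where "p < length xs" "q < length xs" "m < length xs"
    "u = xs ! p" "v = xs ! q" "w = xs ! m"
    using assms(2-4) by (metis in_set_conv_nth)
  then show ?thesis
    using mono_or_antimono_between[OF grid_geodesic_monotone[OF geo]] assms(5,6) by blast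
qed

lemma grid_geodesic_fst_between:
  assumes geo: "geodesic (grid r s) grid_adj xs"
    and "u \<in> set xs" "v \<in> set xs" "w \<in> set xs" "snd u < snd w" "snd w < snd v"
  shows "min (fst u) (fst v) \<le> fst w \<and> fst w \<le> max (fst u) (fst v)"
proof -
  obtain p q m where "p < length xs" "q < length xs" "m < length xs"
    "u = xs ! p" "v = xs ! q" "w = xs ! m"
    using assms(2-4) by (metis in_set_conv_nth)
  then show ?thesis
    using mono_or_antimono_between[OF grid_geodesic_monotone(2,1)[OF geo]] assms(5,6) by blast
qed

section \<open>Corner-to-corner routes\<close>

lemma map_upt_walk:
  assumes "0 < N" "\<And>t. t < N \<Longrightarrow> g t \<in> V" "\<And>t. t + 1 < N \<Longrightarrow> adj (g t) (g (t + 1))"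
  shows "walk V adj (map g [0..<N])"
  using assms unfolding walk_def by auto

lemma map_upt_edge:
  assumes "t + 1 < N" "{g t, g (t + 1)} = e"
  shows "e \<in> walk_edges (map g [0..<N])"
  using assms unfolding walk_edges_def by (auto intro!: exI[of _ t])

lemma grid_geodesic_map_upt:
  assumes "0 < r" "0 < s" "grid_dist (g 0) (g (r + s - 2)) = int (r - 1) + int (s - 1)"
    and "\<And>t. t < r + s - 1 \<Longrightarrow> g t \<in> grid r s"
    and "\<And>t. t + 1 < r + s - 1 \<Longrightarrow> grid_adj (g t) (g (t + 1))"
  shows "geodesic (grid r s) grid_adj (map g [0..<r + s - 1])"
  unfolding grid_geodesic_iff
proof
  show "walk (grid r s) grid_adj (map g [0..<r + s - 1])"
    using assms by (intro map_upt_walk) auto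
  show "int (length (map g [0..<r + s - 1])) =
      grid_dist (hd (map g [0..<r + s - 1])) (last (map g [0..<r + s - 1])) + 1"
    using assms(1-3) by (simp add: hd_map last_map hd_upt of_nat_diff numeral_2_eq_2)
qed

(* Geodesics with two bends between opposite corners: Col_SW_NE i runs from (0, 0) along row 0
   to column i, up column i, and along the top row to (r - 1, s - 1); Col_SE_NW i is its mirror
   image, from (r - 1, 0) to (0, s - 1).  Row_SW_NE j and Row_SE_NW j run along row j instead,
   going up the side columns. *)
datatype route = Col_SW_NE nat | Col_SE_NW nat | Row_SW_NE nat | Row_SE_NW nat

fun route_vertex :: "nat \<Rightarrow> nat \<Rightarrow> route \<Rightarrow> nat \<Rightarrow> nat \<times> nat" where
  "route_vertex r s (Col_SW_NE i) t =
    (if t \<le> i then (t, 0) else if t \<le> i + (s - 1) then (i, t - i) else (t - (s - 1), s - 1))"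
| "route_vertex r s (Col_SE_NW i) t =
    (if t \<le> r - 1 - i then (r - 1 - t, 0) else if t \<le> r - 1 - i + (s - 1) then (i, t - (r - 1 - i))
     else (r + s - 2 - t, s - 1))"
| "route_vertex r s (Row_SW_NE j) t =
    (if t \<le> j then (0, t) else if t \<le> j + (r - 1) then (t - j, j) else (r - 1, t - (r - 1)))"
| "route_vertex r s (Row_SE_NW j) t =
    (if t \<le> j then (r - 1, t) else if t \<le> j + (r - 1) then (r - 1 - (t - j), j)
     else (0, t - (r - 1)))"

definition route_walk :: "nat \<Rightarrow> nat \<Rightarrow> route \<Rightarrow> (nat \<times> nat) list" where
  "route_walk r s \<rho> = map (route_vertex r s \<rho>) [0..<r + s - 1]"

lemma route_geodesic:
  assumes "0 < r" "0 < s"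
  shows "i < r \<Longrightarrow> geodesic (grid r s) grid_adj (route_walk r s (Col_SW_NE i))"
    and "i < r \<Longrightarrow> geodesic (grid r s) grid_adj (route_walk r s (Col_SE_NW i))"
    and "j < s \<Longrightarrow> geodesic (grid r s) grid_adj (route_walk r s (Row_SW_NE j))"
    and "j < s \<Longrightarrow> geodesic (grid r s) grid_adj (route_walk r s (Row_SE_NW j))"
  unfolding route_walk_def using assms
  by (intro grid_geodesic_map_upt;
      auto simp: path_V_def grid_dist_def path_dist_def cart_adj_def path_adj_def)+

lemma route_walk_edgeI:
  assumes "t + 1 < r + s - 1" "route_vertex r s \<rho> t = u" "route_vertex r s \<rho> (t + 1) = v"
  shows "{u, v} \<in> walk_edges (route_walk r s \<rho>)"
  using assms unfolding route_walk_def by (intro map_upt_edge) auto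

lemma Col_SW_NE_edges:
  assumes "i < r" "0 < s"
  shows "x < i \<Longrightarrow> hedge (x, 0) \<in> walk_edges (route_walk r s (Col_SW_NE i))"
    and "y + 1 < s \<Longrightarrow> vedge (i, y) \<in> walk_edges (route_walk r s (Col_SW_NE i))"
    and "i \<le> x \<Longrightarrow> x + 1 < r \<Longrightarrow> hedge (x, s - 1) \<in> walk_edges (route_walk r s (Col_SW_NE i))"
proof -
  show "hedge (x, 0) \<in> walk_edges (route_walk r s (Col_SW_NE i))" if "x < i"
    unfolding hedge_def by (rule route_walk_edgeI[of x]) (use assms that in auto)
  show "vedge (i, y) \<in> walk_edges (route_walk r s (Col_SW_NE i))" if "y + 1 < s"
    unfolding vedge_def by (rule route_walk_edgeI[of "i + y"]) (use assms that in auto)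
  show "hedge (x, s - 1) \<in> walk_edges (route_walk r s (Col_SW_NE i))" if "i \<le> x" "x + 1 < r"
    unfolding hedge_def by (rule route_walk_edgeI[of "x + s - 1"]) (use assms that in auto)
qed

lemma Col_SE_NW_edges:
  assumes "i < r" "0 < s"
  shows "i \<le> x \<Longrightarrow> x + 1 < r \<Longrightarrow> hedge (x, 0) \<in> walk_edges (route_walk r s (Col_SE_NW i))"
    and "y + 1 < s \<Longrightarrow> vedge (i, y) \<in> walk_edges (route_walk r s (Col_SE_NW i))"
    and "x < i \<Longrightarrow> hedge (x, s - 1) \<in> walk_edges (route_walk r s (Col_SE_NW i))"
proof -
  show "hedge (x, 0) \<in> walk_edges (route_walk r s (Col_SE_NW i))" if "i \<le> x" "x + 1 < r"
    unfolding hedge_def insert_commute[of "(x, 0)"]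
    by (rule route_walk_edgeI[of "r - 2 - x"]) (use assms that in auto)
  show "vedge (i, y) \<in> walk_edges (route_walk r s (Col_SE_NW i))" if "y + 1 < s"
    unfolding vedge_def by (rule route_walk_edgeI[of "r - 1 - i + y"]) (use assms that in auto)
  show "hedge (x, s - 1) \<in> walk_edges (route_walk r s (Col_SE_NW i))" if "x < i"
    unfolding hedge_def insert_commute[of "(x, s - 1)"]
    by (rule route_walk_edgeI[of "r + s - 3 - x"]) (use assms that in auto)
qed

lemma Row_SW_NE_edges:
  assumes "j < s" "0 < r"
  shows "y < j \<Longrightarrow> vedge (0, y) \<in> walk_edges (route_walk r s (Row_SW_NE j))"
    and "x + 1 < r \<Longrightarrow> hedge (x, j) \<in> walk_edges (route_walk r s (Row_SW_NE j))"
    and "j \<le> y \<Longrightarrow> y + 1 < s \<Longrightarrow> vedge (r - 1, y) \<in> walk_edges (route_walk r s (Row_SW_NE j))"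
proof -
  show "vedge (0, y) \<in> walk_edges (route_walk r s (Row_SW_NE j))" if "y < j"
    unfolding vedge_def by (rule route_walk_edgeI[of y]) (use assms that in auto)
  show "hedge (x, j) \<in> walk_edges (route_walk r s (Row_SW_NE j))" if "x + 1 < r"
    unfolding hedge_def by (rule route_walk_edgeI[of "j + x"]) (use assms that in auto)
  show "vedge (r - 1, y) \<in> walk_edges (route_walk r s (Row_SW_NE j))" if "j \<le> y" "y + 1 < s"
    unfolding vedge_def by (rule route_walk_edgeI[of "y + r - 1"]) (use assms that in auto)
qed

lemma Row_SE_NW_edges:
  assumes "j < s" "0 < r"
  shows "y < j \<Longrightarrow> vedge (r - 1, y) \<in> walk_edges (route_walk r s (Row_SE_NW j))"
    and "x + 1 < r \<Longrightarrow> hedge (x, j) \<in> walk_edges (route_walk r s (Row_SE_NW j))"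
    and "j \<le> y \<Longrightarrow> y + 1 < s \<Longrightarrow> vedge (0, y) \<in> walk_edges (route_walk r s (Row_SE_NW j))"
proof -
  show "vedge (r - 1, y) \<in> walk_edges (route_walk r s (Row_SE_NW j))" if "y < j"
    unfolding vedge_def by (rule route_walk_edgeI[of y]) (use assms that in auto)
  show "hedge (x, j) \<in> walk_edges (route_walk r s (Row_SE_NW j))" if "x + 1 < r"
    unfolding hedge_def insert_commute[of "(x, j)"]
    by (rule route_walk_edgeI[of "j + r - 2 - x"]) (use assms that in auto)
  show "vedge (0, y) \<in> walk_edges (route_walk r s (Row_SE_NW j))" if "j \<le> y" "y + 1 < s"
    unfolding vedge_def by (rule route_walk_edgeI[of "y + r - 1"]) (use assms that in auto)
qed

lemma boundary_hedge_on_Col_route: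
  assumes "i < r" "0 < s" "x + 1 < r" "y = 0 \<or> y = s - 1"
  shows "\<exists>\<rho>\<in>{Col_SW_NE i, Col_SE_NW i}. hedge (x, y) \<in> walk_edges (route_walk r s \<rho>)"
  using assms Col_SW_NE_edges[OF assms(1,2)] Col_SE_NW_edges[OF assms(1,2)]
  by (cases "x < i") auto

lemma boundary_vedge_on_Row_route:
  assumes "j < s" "0 < r" "y + 1 < s" "x = 0 \<or> x = r - 1"
  shows "\<exists>\<rho>\<in>{Row_SW_NE j, Row_SE_NW j}. vedge (x, y) \<in> walk_edges (route_walk r s \<rho>)"
  using assms Row_SW_NE_edges[OF assms(1,2)] Row_SE_NW_edges[OF assms(1,2)]
  by (cases "y < j") auto

section \<open>Edge general position sets of maximum size\<close>

lemma grid_2_edge_gp_set: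
  "edge_gp_set (grid r 2) grid_adj (vedge ` ({..<r} \<times> {0}) \<union> hedge ` ({0} \<times> {0, 1}))"
  if "2 \<le> r"
  unfolding edge_gp_set_iff
proof (intro conjI allI impI)
  show "vedge ` ({..<r} \<times> {0}) \<union> hedge ` ({0} \<times> {0, 1}) \<subseteq> graph_edges (grid r 2) grid_adj"
    using that by (auto simp: grid_edges)
  fix xs assume geo: "geodesic (grid r 2) grid_adj xs"
  show "card ((vedge ` ({..<r} \<times> {0}) \<union> hedge ` ({0} \<times> {0, 1})) \<inter> walk_edges xs) \<le> 2"
    by (rule card_Int_le_2_two_classes[OF walk_edges_finite _
          grid_geodesic_card_vedges[OF geo, of "{..<r}" 0]
          grid_geodesic_card_hedges[OF geo, of 0 "{0, 1}"]]) auto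
qed

lemma grid_2_card:
  assumes "2 \<le> r"
  shows "card (vedge ` ({..<r} \<times> {0}) \<union> hedge ` ({0} \<times> {0, 1})) = r + 2"
  using hedge_neq_vedge
  by (subst card_Un_disjoint)
     (auto simp: card_image inj_on_subset[OF inj_hedge] inj_on_subset[OF inj_vedge] inj_eq[OF inj_hedge])

lemma grid_3_edge_gp_set: "edge_gp_set (grid r 3) grid_adj (vedge ` ({..<r} \<times> {0, 1}))"
  unfolding edge_gp_set_iff
proof (intro conjI allI impI)
  show "vedge ` ({..<r} \<times> {0, 1}) \<subseteq> graph_edges (grid r 3) grid_adj"
    by (auto simp: grid_edges)
  fix xs assume geo: "geodesic (grid r 3) grid_adj xs"
  show "card (vedge ` ({..<r} \<times> {0, 1}) \<inter> walk_edges xs) \<le> 2"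
    by (rule card_Int_le_2_two_classes[OF walk_edges_finite _
          grid_geodesic_card_vedges[OF geo, of _ 0] grid_geodesic_card_vedges[OF geo, of _ 1]]) auto
qed

lemma grid_3_card: "card (vedge ` ({..<r} \<times> {0, 1})) = 2 * r"
  by (simp add: card_image inj_on_subset[OF inj_vedge] card_cartesian_product)

lemma grid_ge4_edge_gp_set:
  assumes "4 \<le> r" "4 \<le> s"
  shows "edge_gp_set (grid r s) grid_adj
    (hedge ` ({0, r - 2} \<times> {1..<s - 1}) \<union> vedge ` ({1..<r - 1} \<times> {0, s - 2}))"
  unfolding edge_gp_set_iff
proof (intro conjI allI impI)
  show "hedge ` ({0, r - 2} \<times> {1..<s - 1}) \<union> vedge ` ({1..<r - 1} \<times> {0, s - 2})
      \<subseteq> graph_edges (grid r s) grid_adj"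
    unfolding grid_edges using assms by (intro Un_mono image_mono) auto
  fix xs assume geo: "geodesic (grid r s) grid_adj xs"
  define W where "W = walk_edges xs"
  let ?L = "hedge ` ({0} \<times> {1..<s - 1})" and ?R = "hedge ` ({r - 2} \<times> {1..<s - 1})"
  let ?B = "vedge ` ({1..<r - 1} \<times> {0})" and ?T = "vedge ` ({1..<r - 1} \<times> {s - 2})"
  have sides: "r - 2 + 1 = r - 1" "s - 2 + 1 = s - 1" using assms by simp_all
  have "W \<inter> (?B \<union> ?T) = {}" if hits: "W \<inter> ?L \<noteq> {}" "W \<inter> ?R \<noteq> {}"
  proof -
    obtain y y' where "hedge (0, y) \<in> W" "hedge (r - 2, y') \<in> W" "0 < y" "y < s - 1" "0 < y'" "y' < s - 1"
      using hits by (auto simp: Suc_le_eq)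
    then have "(0, y) \<in> set xs" "(r - 1, y') \<in> set xs" "0 < y" "y < s - 1" "0 < y'" "y' < s - 1"
      unfolding W_def by (metis hedge_in_walk_edges sides(1))+
    then have "0 < z \<and> z < s - 1" if "(x, z) \<in> set xs" "0 < x" "x < r - 1" for x z
      using grid_geodesic_snd_between[OF geo _ _ that(1)] that(2,3) by fastforce
    then show ?thesis
      unfolding W_def using sides by (force dest: vedge_in_walk_edges)
  qed
  moreover have "W \<inter> (?L \<union> ?R) = {}" if hits: "W \<inter> ?B \<noteq> {}" "W \<inter> ?T \<noteq> {}"
  proof -
    obtain x x' where "vedge (x, 0) \<in> W" "vedge (x', s - 2) \<in> W" "0 < x" "x < r - 1" "0 < x'" "x' < r - 1"
      using hits by (auto simp: Suc_le_eq)
    then have "(x, 0) \<in> set xs" "(x', s - 1) \<in> set xs" "0 < x" "x < r - 1" "0 < x'" "x' < r - 1"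
      unfolding W_def by (metis vedge_in_walk_edges sides(2))+
    then have "0 < z \<and> z < r - 1" if "(z, y) \<in> set xs" "0 < y" "y < s - 1" for y z
      using grid_geodesic_fst_between[OF geo _ _ that(1)] that(2,3) by fastforce
    then show ?thesis
      unfolding W_def using sides by (force dest: hedge_in_walk_edges)
  qed
  moreover have "hedge ` ({0, r - 2} \<times> {1..<s - 1}) \<union> vedge ` ({1..<r - 1} \<times> {0, s - 2}) =
      ?L \<union> ?R \<union> ?B \<union> ?T" by blast
  ultimately show "card ((hedge ` ({0, r - 2} \<times> {1..<s - 1}) \<union> vedge ` ({1..<r - 1} \<times> {0, s - 2}))
      \<inter> walk_edges xs) \<le> 2"
    using card_Int_le_2_opposite_pairs[of W ?L ?R ?B ?T] grid_geodesic_card_hedges[OF geo]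
      grid_geodesic_card_vedges[OF geo]
    unfolding W_def by simp
qed

lemma grid_ge4_card:
  assumes "4 \<le> r" "4 \<le> s"
  shows "card (hedge ` ({0, r - 2} \<times> {1..<s - 1}) \<union> vedge ` ({1..<r - 1} \<times> {0, s - 2})) =
    2 * r + 2 * s - 8"
  using assms hedge_neq_vedge
  by (subst card_Un_disjoint)
     (auto simp: card_image inj_on_subset[OF inj_hedge] inj_on_subset[OF inj_vedge] card_cartesian_product)

section \<open>Upper bounds\<close>

lemma grid_2_hedge_if_not_vedge:
  assumes "e \<in> graph_edges (grid r 2) grid_adj" "e \<notin> vedge ` ({..<r} \<times> {0})"
  shows "\<exists>x y. e = hedge (x, y) \<and> x + 1 < r \<and> y < 2"
proof -
  have "{p. fst p < r \<and> snd p + 1 < 2} = {..<r} \<times> {0::nat}" by auto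
  then have "e \<in> hedge ` {p. fst p + 1 < r \<and> snd p < 2}"
    using assms unfolding grid_edges by blast
  then show ?thesis by force
qed

lemma grid_2_card_hedges_le:
  assumes gp: "edge_gp_set (grid r 2) grid_adj S" and k: "k < r" "vedge (k, 0) \<in> S"
  shows "card (S - vedge ` ({..<r} \<times> {0})) \<le> 2"
proof -
  let ?W = "\<lambda>\<rho>. S \<inter> walk_edges (route_walk r 2 \<rho>)"
  let ?e = "vedge (k, 0)" and ?P1 = "Col_SW_NE k" and ?P2 = "Col_SE_NW k"
  have S: "S \<subseteq> graph_edges (grid r 2) grid_adj" "finite S"
    using gp edge_gp_set_finite[OF _ gp] by (simp_all add: edge_gp_set_iff path_V_def)
  \<comment> \<open>both routes through column k contain the vertical edge, and together they contain every horizontal edge\<close>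
  have e: "?e \<in> ?W ?P1" "?e \<in> ?W ?P2"
    using k Col_SW_NE_edges(2)[of k r 2 0] Col_SE_NW_edges(2)[of k r 2 0] by auto
  have "e \<in> (?W ?P1 - {?e}) \<union> (?W ?P2 - {?e})" if "e \<in> S - vedge ` ({..<r} \<times> {0})" for e
  proof -
    have "e \<in> graph_edges (grid r 2) grid_adj" "e \<notin> vedge ` ({..<r} \<times> {0})" using that S(1) by auto
    then obtain x y where "e = hedge (x, y)" "x + 1 < r" "y < 2"
      using grid_2_hedge_if_not_vedge by blast
    moreover from \<open>y < 2\<close> have "y = 0 \<or> y = 2 - 1" by auto
    ultimately have "e \<in> walk_edges (route_walk r 2 ?P1) \<or> e \<in> walk_edges (route_walk r 2 ?P2)"
      using k boundary_hedge_on_Col_route[of k r 2 x y] by auto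
    moreover have "e \<noteq> ?e" using that k by auto
    ultimately show ?thesis using that by auto
  qed
  then have "S - vedge ` ({..<r} \<times> {0}) \<subseteq> (?W ?P1 - {?e}) \<union> (?W ?P2 - {?e})" by blast
  then have "card (S - vedge ` ({..<r} \<times> {0})) \<le> card (?W ?P1 - {?e}) + card (?W ?P2 - {?e})"
    using S(2) by (meson card_Un_le card_mono finite_Un finite_Diff finite_Int order_trans)
  also have "\<dots> \<le> 2"
    using edge_gp_set_card_walk_edges[OF gp route_geodesic(1)[of r 2 k]]
      edge_gp_set_card_walk_edges[OF gp route_geodesic(2)[of r 2 k]] k e S(2)
    by (simp add: card_Diff_singleton)
  finally show ?thesis .
qed

lemma grid_2_card_le:
  assumes gp: "edge_gp_set (grid r 2) grid_adj S" and "2 \<le> r"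
  shows "card S \<le> r + 2"
proof -
  let ?V = "vedge ` ({..<r} \<times> {0})"
  let ?W = "\<lambda>\<rho>. S \<inter> walk_edges (route_walk r 2 \<rho>)"
  have S: "S \<subseteq> graph_edges (grid r 2) grid_adj" "finite S"
    using gp edge_gp_set_finite[OF _ gp] by (simp_all add: edge_gp_set_iff path_V_def)
  show ?thesis
  proof (cases "S \<inter> ?V = {}")
    case True
    have "e \<in> ?W (Row_SW_NE 0) \<union> ?W (Row_SW_NE 1)" if "e \<in> S" for e
    proof -
      have "e \<in> graph_edges (grid r 2) grid_adj" "e \<notin> ?V" using that S(1) True by auto
      then obtain x y where "e = hedge (x, y)" "x + 1 < r" "y < 2"
        using grid_2_hedge_if_not_vedge by blast
      then show ?thesis
        using that Row_SW_NE_edges(2)[of 0 2 r x] Row_SW_NE_edges(2)[of 1 2 r x]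
        by (auto simp: less_2_cases_iff)
    qed
    then have "S \<subseteq> ?W (Row_SW_NE 0) \<union> ?W (Row_SW_NE 1)" by blast
    then have "card S \<le> card (?W (Row_SW_NE 0)) + card (?W (Row_SW_NE 1))"
      using S(2) by (meson card_Un_le card_mono finite_Un finite_Int order_trans)
    also have "\<dots> \<le> 4"
      using edge_gp_set_card_walk_edges[OF gp route_geodesic(3)[of r 2 0]]
        edge_gp_set_card_walk_edges[OF gp route_geodesic(3)[of r 2 1]] assms(2)
      by simp
    finally show ?thesis using assms(2) by simp
  next
    case False
    then obtain k where "k < r" "vedge (k, 0) \<in> S" by auto
    then have "card (S - ?V) \<le> 2" by (rule grid_2_card_hedges_le[OF gp])
    moreover have "card (S \<inter> ?V) \<le> r"
      using card_mono[of ?V "S \<inter> ?V"] card_image_le[of "{..<r} \<times> {0::nat}" vedge] by simp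
    moreover have "card S \<le> card (S - ?V) + card (S \<inter> ?V)"
      by (metis Int_Diff_Un card_Un_le Un_commute)
    ultimately show ?thesis by simp
  qed
qed

definition grid_3_routes :: "nat \<Rightarrow> route set" where
  "grid_3_routes r = {Row_SW_NE 1, Row_SE_NW 1} \<union> Col_SW_NE ` {..<r} \<union> Col_SE_NW ` {1..<r - 1}"

lemma card_grid_3_routes: "3 \<le> r \<Longrightarrow> card (grid_3_routes r) = 2 * r"
  unfolding grid_3_routes_def by (subst card_Un_disjoint; auto simp: card_image inj_on_def image_iff)+

lemma grid_3_routes_cover:
  assumes "3 \<le> r" "e \<in> graph_edges (grid r 3) grid_adj"
  shows "\<exists>\<rho>1\<in>grid_3_routes r. \<exists>\<rho>2\<in>grid_3_routes r. \<rho>1 \<noteq> \<rho>2 \<and>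
    e \<in> walk_edges (route_walk r 3 \<rho>1) \<and> e \<in> walk_edges (route_walk r 3 \<rho>2)"
proof -
  let ?K = "grid_3_routes r"
  from assms(2) consider (h) x y where "e = hedge (x, y)" "x + 1 < r" "y < 3"
    | (v) x y where "e = vedge (x, y)" "x < r" "y + 1 < 3"
    unfolding grid_edges by auto
  then show ?thesis
  proof cases
    case h
    show ?thesis
    proof (cases "y = 1")
      case True
      show ?thesis
        unfolding grid_3_routes_def
        by (rule bexI[of _ "Row_SW_NE 1"], rule bexI[of _ "Row_SE_NW 1"])
           (use True h Row_SW_NE_edges(2) Row_SE_NW_edges(2) in auto)
    next
      case False
      then have y: "y = 0 \<or> y = 2" using h(3) by linarith
      then obtain \<rho> where \<rho>: "\<rho> \<in> {Col_SW_NE 1, Col_SE_NW 1}" "e \<in> walk_edges (route_walk r 3 \<rho>)"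
        using h assms(1) boundary_hedge_on_Col_route[of 1 r 3 x y] by auto
      define i where "i = (if y = 0 then r - 1 else 0)"
      have "e \<in> walk_edges (route_walk r 3 (Col_SW_NE i))"
        using y h Col_SW_NE_edges(1)[of "r - 1" r 3 x] Col_SW_NE_edges(3)[of 0 r 3 x]
        unfolding i_def by auto
      then show ?thesis
        unfolding grid_3_routes_def
        by - (rule bexI[of _ \<rho>], rule bexI[of _ "Col_SW_NE i"], use \<rho> assms(1) in \<open>auto simp: i_def\<close>)
    qed
  next
    case v
    have "Col_SW_NE x \<in> ?K" "e \<in> walk_edges (route_walk r 3 (Col_SW_NE x))"
      using v Col_SW_NE_edges(2)[of x r 3 y] unfolding grid_3_routes_def by simp_all
    moreover obtain \<rho> where "\<rho> \<in> ?K - {Col_SW_NE x}" "e \<in> walk_edges (route_walk r 3 \<rho>)"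
    proof (cases "0 < x \<and> x < r - 1")
      case True
      then show ?thesis
        using v Col_SE_NW_edges(2)[of x r 3 y] that[of "Col_SE_NW x"] unfolding grid_3_routes_def by auto
    next
      case False
      then have "x = 0 \<or> x = r - 1" using v(2) by auto
      then show ?thesis
        using v assms(1) boundary_vedge_on_Row_route[of 1 3 r y x] that
        unfolding grid_3_routes_def by auto
    qed
    ultimately show ?thesis by blast
  qed
qed

lemma grid_3_card_le:
  assumes gp: "edge_gp_set (grid r 3) grid_adj S" and "3 \<le> r"
  shows "card S \<le> 2 * r"
proof -
  have "card S \<le> card (grid_3_routes r)"
  proof (rule edge_gp_card_le_double_cover[OF gp, where P = "route_walk r 3"])
    show "finite (grid r 3)" "finite (grid_3_routes r)" by (simp_all add: path_V_def grid_3_routes_def)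
    show "geodesic (grid r 3) grid_adj (route_walk r 3 \<rho>)" if "\<rho> \<in> grid_3_routes r" for \<rho>
      using that assms(2) route_geodesic[of r 3] unfolding grid_3_routes_def by auto
  qed (use grid_3_routes_cover assms(2) in blast)
  then show ?thesis using card_grid_3_routes[OF assms(2)] by simp
qed

definition grid_routes :: "nat \<Rightarrow> nat \<Rightarrow> route set" where
  "grid_routes r s = Row_SW_NE ` {1..<s - 1} \<union> Row_SE_NW ` {1..<s - 1} \<union>
    Col_SW_NE ` {1..<r - 1} \<union> Col_SE_NW ` {1..<r - 1}"

lemma card_grid_routes: "4 \<le> s \<Longrightarrow> s \<le> r \<Longrightarrow> card (grid_routes r s) = 2 * r + 2 * s - 8"
  unfolding grid_routes_def by (subst card_Un_disjoint; auto simp: card_image inj_on_def)+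

lemma grid_routes_cover:
  assumes "4 \<le> s" "s \<le> r" "e \<in> graph_edges (grid r s) grid_adj"
  shows "\<exists>\<rho>1\<in>grid_routes r s. \<exists>\<rho>2\<in>grid_routes r s. \<rho>1 \<noteq> \<rho>2 \<and>
    e \<in> walk_edges (route_walk r s \<rho>1) \<and> e \<in> walk_edges (route_walk r s \<rho>2)"
proof -
  from assms(3) consider (h) x y where "e = hedge (x, y)" "x + 1 < r" "y < s"
    | (v) x y where "e = vedge (x, y)" "x < r" "y + 1 < s"
    unfolding grid_edges by auto
  then show ?thesis
  proof cases
    case h
    show ?thesis
    proof (cases "0 < y \<and> y < s - 1")
      case True
      show ?thesis
        unfolding grid_routes_def
        by (rule bexI[of _ "Row_SW_NE y"], rule bexI[of _ "Row_SE_NW y"])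
           (use True h Row_SW_NE_edges(2) Row_SE_NW_edges(2) in auto)
    next
      case False
      then obtain \<rho>1 \<rho>2 where "\<rho>1 \<in> {Col_SW_NE 1, Col_SE_NW 1}" "\<rho>2 \<in> {Col_SW_NE (r - 2), Col_SE_NW (r - 2)}"
        "e \<in> walk_edges (route_walk r s \<rho>1)" "e \<in> walk_edges (route_walk r s \<rho>2)"
        using h assms(1,2) boundary_hedge_on_Col_route[of 1 r s x y]
          boundary_hedge_on_Col_route[of "r - 2" r s x y] by fastforce
      moreover have "\<rho>1 \<in> grid_routes r s" "\<rho>2 \<in> grid_routes r s" "\<rho>1 \<noteq> \<rho>2"
        using \<open>\<rho>1 \<in> _\<close> \<open>\<rho>2 \<in> _\<close> assms(1,2) unfolding grid_routes_def by (auto simp: image_iff)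
      ultimately show ?thesis by blast
    qed
  next
    case v
    show ?thesis
    proof (cases "0 < x \<and> x < r - 1")
      case True
      show ?thesis
        unfolding grid_routes_def
        by (rule bexI[of _ "Col_SW_NE x"], rule bexI[of _ "Col_SE_NW x"])
           (use True v Col_SW_NE_edges(2) Col_SE_NW_edges(2) in auto)
    next
      case False
      then obtain \<rho>1 \<rho>2 where "\<rho>1 \<in> {Row_SW_NE 1, Row_SE_NW 1}" "\<rho>2 \<in> {Row_SW_NE (s - 2), Row_SE_NW (s - 2)}"
        "e \<in> walk_edges (route_walk r s \<rho>1)" "e \<in> walk_edges (route_walk r s \<rho>2)"
        using v assms(1,2) boundary_vedge_on_Row_route[of 1 s r y x]
          boundary_vedge_on_Row_route[of "s - 2" s r y x] by fastforce
      moreover have "\<rho>1 \<in> grid_routes r s" "\<rho>2 \<in> grid_routes r s" "\<rho>1 \<noteq> \<rho>2"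
        using \<open>\<rho>1 \<in> _\<close> \<open>\<rho>2 \<in> _\<close> assms(1,2) unfolding grid_routes_def by (auto simp: image_iff)
      ultimately show ?thesis by blast
    qed
  qed
qed

lemma grid_ge4_card_le:
  assumes gp: "edge_gp_set (grid r s) grid_adj S" and "4 \<le> s" "s \<le> r"
  shows "card S \<le> 2 * r + 2 * s - 8"
proof -
  have "card S \<le> card (grid_routes r s)"
  proof (rule edge_gp_card_le_double_cover[OF gp, where P = "route_walk r s"])
    show "finite (grid r s)" "finite (grid_routes r s)" by (simp_all add: path_V_def grid_routes_def)
    show "geodesic (grid r s) grid_adj (route_walk r s \<rho>)" if "\<rho> \<in> grid_routes r s" for \<rho>
      using that assms(2,3) route_geodesic[of r s] unfolding grid_routes_def by auto
  qed (use grid_routes_cover assms(2,3) in blast)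
  then show ?thesis using card_grid_routes[OF assms(2,3)] by simp
qed

lemma gp_e_grid_2: "2 \<le> r \<Longrightarrow> gp_e (grid r 2) grid_adj = r + 2"
  by (rule gp_e_eqI[OF grid_2_card_le grid_2_edge_gp_set grid_2_card])

lemma gp_e_grid_3: "3 \<le> r \<Longrightarrow> gp_e (grid r 3) grid_adj = 2 * r"
  by (rule gp_e_eqI[OF grid_3_card_le grid_3_edge_gp_set grid_3_card])

lemma gp_e_grid_ge4: "4 \<le> s \<Longrightarrow> s \<le> r \<Longrightarrow> gp_e (grid r s) grid_adj = 2 * r + 2 * s - 8"
  by (rule gp_e_eqI[OF grid_ge4_card_le grid_ge4_edge_gp_set grid_ge4_card]) auto

theorem theorem4p1:
  fixes r s :: nat
  assumes "2 \<le> s" and "s \<le> r"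
  shows "gp_e (path_V r \<times> path_V s) (cart_adj path_adj path_adj) =
           (if s = 2 then r + 2 else if s = 3 then 2 * r else 2 * r + 2 * s - 8)"
proof -
  consider "s = 2" | "s = 3" | "4 \<le> s" using assms(1) by linarith
  then show ?thesis
    by cases (use assms in \<open>simp_all add: gp_e_grid_2 gp_e_grid_3 gp_e_grid_ge4\<close>)
qed

end
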